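(* Let $G$ be a finite group of order $2^n$ with $n\ge2$, having normal subgroups $H_1$ and $H_2$ such that $G/H_1\cong(\mathbb{Z}/2\mathbb{Z})^{\oplus(n-2)}$ and $G/H_2\cong\mathbb{Z}/4\mathbb{Z}$. Then every subgroup of $H_1$ is normal in $G$. *)

theory Defs
  imports "HOL-Algebra.Algebra"
begin

end

theory Submission
  imports Defs
begin

(* Both quotients G/H1 and G/H2 are abelian, so every commutator lies in N = H1 \<inter> H2.
   Since G/H1 has exponent 2, all squares lie in H1, and a preimage g of a generator of
   Z/4 has s = g^2 \<notin> H2; Lagrange gives |H1| = 4. If G is nonabelian, a nontrivial
   commutator w forces H1 = {1, w, s, s w} and N = {1, w}. A normal subgroup of order 2 is
   central, so [x, g^2] = [x, g]^2 = 1 and s is central as well. Thus H1 lies in the centre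
   of G, and every subgroup of a central subgroup is normal. *)

lemma comm_group_product_group:
  assumes "\<And>i. i \<in> I \<Longrightarrow> comm_group (G i)"
  shows "comm_group (product_group I G)"
proof (rule group.group_comm_groupI)
  show "group (product_group I G)"
    using assms by (simp add: comm_group_def)
  fix x y assume "x \<in> carrier (product_group I G)" "y \<in> carrier (product_group I G)"
  then show "x \<otimes>\<^bsub>product_group I G\<^esub> y = y \<otimes>\<^bsub>product_group I G\<^esub> x"
    using assms by (auto simp: fun_eq_iff PiE_iff comm_groupE(4))
qed

lemma product_integer_mod_group_two_square_one:
  assumes "f \<in> carrier (product_group I (\<lambda>_. integer_mod_group 2))"
  shows "f \<otimes>\<^bsub>product_group I (\<lambda>_. integer_mod_group 2)\<^esub> f
           = \<one>\<^bsub>product_group I (\<lambda>_. integer_mod_group 2)\<^esub>"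
proof -
  have "f i \<in> {0..<2}" if "i \<in> I" for i
    using assms that by (auto simp: carrier_integer_mod_group PiE_iff)
  then show ?thesis
    using assms by (auto simp: fun_eq_iff PiE_iff)
qed

lemma card_product_integer_mod_group:
  assumes "finite I"
  shows "card (carrier (product_group I (\<lambda>_. integer_mod_group m))) = m ^ card I"
  using assms by (simp add: card_PiE carrier_integer_mod_group)

lemma (in normal) iso_quotient_hom:
  assumes "\<phi> \<in> iso (G Mod H) A" and "group A"
  shows "(\<lambda>x. \<phi> (H #> x)) \<in> hom G A"
    and "(\<lambda>x. \<phi> (H #> x)) ` carrier G = carrier A"
    and "x \<in> carrier G \<Longrightarrow> \<phi> (H #> x) = \<one>\<^bsub>A\<^esub> \<longleftrightarrow> x \<in> H"
proof -
  have hom: "\<phi> \<in> hom (G Mod H) A" and bij: "bij_betw \<phi> (carrier (G Mod H)) (carrier A)"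
    using assms(1) by (auto simp: iso_def)
  show "(\<lambda>x. \<phi> (H #> x)) \<in> hom G A"
    using Group.hom_compose[OF r_coset_hom_Mod hom] by (simp add: comp_def)
  show "(\<lambda>x. \<phi> (H #> x)) ` carrier G = carrier A"
    using bij by (simp add: bij_betw_def carrier_FactGroup image_image)
  assume x: "x \<in> carrier G"
  have "\<phi> H = \<one>\<^bsub>A\<^esub>"
    using hom_one[OF hom factorgroup_is_group assms(2)] by simp
  moreover have "H \<in> carrier (G Mod H)" "H #> x \<in> carrier (G Mod H)"
    using x subgroup_in_rcosets[OF is_group] by (auto simp: FactGroup_def intro: rcosetsI)
  ultimately have "\<phi> (H #> x) = \<one>\<^bsub>A\<^esub> \<longleftrightarrow> H #> x = H"
    using bij by (metis bij_betw_def inj_on_contraD)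
  also have "\<dots> \<longleftrightarrow> x \<in> H"
    using x rcos_self[OF x subgroup_axioms] rcos_const[OF is_group] by blast
  finally show "\<phi> (H #> x) = \<one>\<^bsub>A\<^esub> \<longleftrightarrow> x \<in> H" .
qed

lemma (in normal) square_mem_if_quotient_exponent_two:
  assumes "G Mod H \<cong> A" and "group A" and "\<And>a. a \<in> carrier A \<Longrightarrow> a \<otimes>\<^bsub>A\<^esub> a = \<one>\<^bsub>A\<^esub>"
    and "x \<in> carrier G"
  shows "x \<otimes> x \<in> H"
proof -
  obtain \<phi> where \<phi>: "\<phi> \<in> iso (G Mod H) A"
    using assms(1) by (auto simp: is_iso_def)
  note \<psi> = iso_quotient_hom[OF \<phi> assms(2)]
  have "\<phi> (H #> x) \<in> carrier A"
    using \<psi>(2) assms(4) by blast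
  then have "\<phi> (H #> (x \<otimes> x)) = \<one>\<^bsub>A\<^esub>"
    using hom_mult[OF \<psi>(1) assms(4) assms(4)] assms(3) by simp
  then show ?thesis
    using \<psi>(3) assms(4) by blast
qed

lemma (in normal) obtain_square_not_mem_if_quotient_iso:
  assumes "G Mod H \<cong> A" and "group A" and "a \<in> carrier A" and "a \<otimes>\<^bsub>A\<^esub> a \<noteq> \<one>\<^bsub>A\<^esub>"
  obtains x where "x \<in> carrier G" and "x \<otimes> x \<notin> H"
proof -
  obtain \<phi> where \<phi>: "\<phi> \<in> iso (G Mod H) A"
    using assms(1) by (auto simp: is_iso_def)
  note \<psi> = iso_quotient_hom[OF \<phi> assms(2)]
  obtain x where x: "x \<in> carrier G" "\<phi> (H #> x) = a"
    using \<psi>(2) assms(3) by (metis imageE)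
  then have "\<phi> (H #> (x \<otimes> x)) \<noteq> \<one>\<^bsub>A\<^esub>"
    using hom_mult[OF \<psi>(1) x(1) x(1)] assms(4) by simp
  then show ?thesis
    using that \<psi>(3) x(1) by blast
qed

lemma (in normal) card_quotient_iso_mult_card:
  assumes "G Mod H \<cong> A"
  shows "card (carrier A) * card H = order G"
  using lagrange[OF subgroup_axioms] iso_same_card[OF assms] by (simp add: FactGroup_def)

lemma (in normal) comm_group_quotient_if_iso:
  assumes "G Mod H \<cong> A" and "comm_group A"
  shows "comm_group (G Mod H)"
  by (rule comm_group.iso_imp_comm_group[OF assms(2) group.iso_sym[OF factorgroup_is_group assms(1)]])
    (simp add: group.is_monoid factorgroup_is_group)

lemma (in group) commutator_mem_derived:
  assumes "x \<in> carrier G" and "y \<in> carrier G"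
  shows "x \<otimes> y \<otimes> inv x \<otimes> inv y \<in> derived G (carrier G)"
  using assms unfolding derived_def by (blast intro: generate.incl)

lemma (in group) commutator_mult_swap:
  assumes "x \<in> carrier G" and "y \<in> carrier G"
  shows "x \<otimes> y = (x \<otimes> y \<otimes> inv x \<otimes> inv y) \<otimes> (y \<otimes> x)"
proof -
  have "inv x \<otimes> (inv y \<otimes> (y \<otimes> x)) = \<one>"
    using assms by (simp flip: m_assoc)
  then show ?thesis
    using assms by (simp add: m_assoc)
qed

lemma (in group) normal_subset_pair_central:
  assumes "N \<lhd> G" and "N \<subseteq> {\<one>, w}" and c: "c \<in> N" and x: "x \<in> carrier G"
  shows "x \<otimes> c = c \<otimes> x"
proof -
  have cG: "c \<in> carrier G"
    using subgroup.mem_carrier[OF normal_imp_subgroup[OF assms(1)] c] .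
  have conj: "x \<otimes> c = (x \<otimes> c \<otimes> inv x) \<otimes> x"
    using x cG by (simp add: m_assoc)
  have "x \<otimes> c \<otimes> inv x \<in> {\<one>, w}" and "c \<in> {\<one>, w}"
    using normal_invE(2)[OF assms(1) x c] assms(2) c by blast+
  then consider "c = \<one>" | "x \<otimes> c \<otimes> inv x = \<one>" | "x \<otimes> c \<otimes> inv x = c"
    by fastforce
  then show ?thesis
  proof cases
    case 1
    then show ?thesis
      using x by simp
  next
    case 2
    then have "c = \<one>"
      using conj[unfolded 2] x cG by simp
    then show ?thesis
      using x by simp
  next
    case 3
    from conj[unfolded 3] show ?thesis .
  qed
qed

lemma (in group) subgroup_subset_pair_square_one:
  assumes "subgroup N G" and "N \<subseteq> {\<one>, w}" and c: "c \<in> N"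
  shows "c \<otimes> c = \<one>"
proof -
  have cG: "c \<in> carrier G"
    using subgroup.mem_carrier[OF assms(1) c] .
  have "c \<otimes> c \<in> {\<one>, w}" and "c \<in> {\<one>, w}"
    using subgroup.m_closed[OF assms(1) c c] assms(2) c by blast+
  then show ?thesis
    using cG by auto
qed

lemma (in group) commute_with_square_if_central_involution_swap:
  assumes x: "x \<in> carrier G" and g: "g \<in> carrier G" and d: "d \<in> carrier G"
    and swap: "x \<otimes> g = d \<otimes> (g \<otimes> x)" and central: "d \<otimes> g = g \<otimes> d" and square: "d \<otimes> d = \<one>"
  shows "x \<otimes> (g \<otimes> g) = (g \<otimes> g) \<otimes> x"
proof -
  have "x \<otimes> (g \<otimes> g) = d \<otimes> (g \<otimes> x) \<otimes> g"
    using x g d by (simp add: swap flip: m_assoc)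
  also have "\<dots> = d \<otimes> g \<otimes> (x \<otimes> g)"
    using x g d by (simp add: m_assoc)
  also have "\<dots> = d \<otimes> g \<otimes> (d \<otimes> (g \<otimes> x))"
    by (simp only: swap)
  also have "\<dots> = g \<otimes> (d \<otimes> d) \<otimes> (g \<otimes> x)"
    using x g d by (simp add: central m_assoc)
  also have "\<dots> = (g \<otimes> g) \<otimes> x"
    using x g d by (simp add: square m_assoc)
  finally show ?thesis .
qed

lemma (in group) square_central_if_derived_subset_pair:
  assumes "derived G (carrier G) \<subseteq> N" and N: "N \<lhd> G" and "N \<subseteq> {\<one>, w}"
    and x: "x \<in> carrier G" and g: "g \<in> carrier G"
  shows "x \<otimes> (g \<otimes> g) = (g \<otimes> g) \<otimes> x"
proof -
  define d where "d = x \<otimes> g \<otimes> inv x \<otimes> inv g"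
  have d: "d \<in> N"
    using assms(1) commutator_mem_derived[OF x g] by (auto simp: d_def)
  show ?thesis
  proof (rule commute_with_square_if_central_involution_swap[OF x g])
    show "d \<in> carrier G"
      using x g by (simp add: d_def)
    show "x \<otimes> g = d \<otimes> (g \<otimes> x)"
      using commutator_mult_swap[OF x g] by (simp add: d_def)
    show "d \<otimes> g = g \<otimes> d"
      using normal_subset_pair_central[OF N assms(3) d g] by simp
    show "d \<otimes> d = \<one>"
      using subgroup_subset_pair_square_one[OF normal_imp_subgroup[OF N] assms(3) d] .
  qed
qed

lemma (in group) card_four_subgroup_eq:
  assumes H: "subgroup H G" and K: "subgroup K G" and "finite H" and "card H = 4"
    and w: "w \<in> H" "w \<in> K" "w \<noteq> \<one>" and s: "s \<in> H" "s \<notin> K"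
  shows "H = {\<one>, w, s, s \<otimes> w}" and "H \<inter> K = {\<one>, w}"
proof -
  have wG: "w \<in> carrier G" and sG: "s \<in> carrier G"
    using subgroup.mem_carrier[OF H] w(1) s(1) by auto
  have one: "\<one> \<in> H" "\<one> \<in> K"
    using subgroup.one_closed[OF H] subgroup.one_closed[OF K] by auto
  have sw: "s \<otimes> w \<notin> K"
  proof
    assume "s \<otimes> w \<in> K"
    then have "s \<otimes> w \<otimes> inv w \<in> K"
      using subgroup.m_closed[OF K] subgroup.m_inv_closed[OF K w(2)] by blast
    then show False
      using s(2) wG sG by (simp add: m_assoc)
  qed
  have "s \<otimes> w \<noteq> s"
    using w(3) sG wG by simp
  moreover have "\<one> \<noteq> s" "\<one> \<noteq> s \<otimes> w" "w \<noteq> s" "w \<noteq> s \<otimes> w"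
    using w(2) s(2) sw one(2) by auto
  ultimately have "card {\<one>, w, s, s \<otimes> w} = 4"
    using w(3) by simp
  moreover have "{\<one>, w, s, s \<otimes> w} \<subseteq> H"
    using subgroup.m_closed[OF H s(1) w(1)] w(1) s(1) one(1) by blast
  ultimately show H4: "H = {\<one>, w, s, s \<otimes> w}"
    using assms(3,4) by (metis card_subset_eq)
  show "H \<inter> K = {\<one>, w}"
    using H4 w s sw one by auto
qed

lemma (in group) normal_if_central:
  assumes K: "subgroup K G" and central: "\<And>h x. h \<in> K \<Longrightarrow> x \<in> carrier G \<Longrightarrow> x \<otimes> h = h \<otimes> x"
  shows "K \<lhd> G"
proof (rule normal_invI[OF K])
  fix x h assume x: "x \<in> carrier G" and h: "h \<in> K"
  have "x \<otimes> h \<otimes> inv x = h"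
    using central[OF h x] x subgroup.mem_carrier[OF K h] by (simp add: m_assoc)
  with h show "x \<otimes> h \<otimes> inv x \<in> K"
    by simp
qed

lemma (in group) central_if_card_four_normal:
  assumes H1: "H1 \<lhd> G" and H2: "H2 \<lhd> G" and "finite H1" and "card H1 = 4"
    and derived: "derived G (carrier G) \<subseteq> H1 \<inter> H2"
    and g: "g \<in> carrier G" "g \<otimes> g \<in> H1" "g \<otimes> g \<notin> H2"
    and h: "h \<in> H1" and x: "x \<in> carrier G"
  shows "x \<otimes> h = h \<otimes> x"
proof -
  have sub1: "subgroup H1 G" and sub2: "subgroup H2 G"
    using H1 H2 normal_imp_subgroup by auto
  have hG: "h \<in> carrier G"
    using subgroup.mem_carrier[OF sub1 h] .
  show ?thesis
  proof (cases "\<forall>a \<in> carrier G. \<forall>b \<in> carrier G. a \<otimes> b \<otimes> inv a \<otimes> inv b = \<one>")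
    case True
    then show ?thesis
      using commutator_mult_swap[OF x hG] x hG by simp
  next
    case False
    then obtain a b where ab: "a \<in> carrier G" "b \<in> carrier G" "a \<otimes> b \<otimes> inv a \<otimes> inv b \<noteq> \<one>"
      by blast
    define w where "w = a \<otimes> b \<otimes> inv a \<otimes> inv b"
    have w: "w \<in> H1" "w \<in> H2" "w \<noteq> \<one>"
      using derived commutator_mem_derived[OF ab(1,2)] ab(3) by (auto simp: w_def)
    have wG: "w \<in> carrier G"
      using subgroup.mem_carrier[OF sub1 w(1)] .
    define s where "s = g \<otimes> g"
    have sG: "s \<in> carrier G"
      using g(1) by (simp add: s_def)
    note pair = card_four_subgroup_eq[OF sub1 sub2 assms(3,4) w g(2,3), folded s_def]
    have N: "H1 \<inter> H2 \<lhd> G"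
      using normal_subgroup_intersect[OF H1 H2] .
    have w_central: "y \<otimes> w = w \<otimes> y" if "y \<in> carrier G" for y
      using normal_subset_pair_central[OF N _ _ that] w pair(2) by blast
    have s_central: "y \<otimes> s = s \<otimes> y" if "y \<in> carrier G" for y
      using square_central_if_derived_subset_pair[OF derived N pair(2)[THEN equalityD1] that g(1)]
      by (simp add: s_def)
    have "h \<in> {\<one>, w, s, s \<otimes> w}"
      using h pair(1) by blast
    moreover have "x \<otimes> (s \<otimes> w) = (s \<otimes> w) \<otimes> x"
      using x sG wG s_central[OF x] w_central[OF x] by (metis m_assoc)
    ultimately show ?thesis
      using x wG sG s_central[OF x] w_central[OF x] by auto
  qed
qed

theorem lemma4p2:
  fixes G (structure) and H1 H2 :: "'a set" and n :: nat
  assumes "group G"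
    and "finite (carrier G)"
    and "order G = 2 ^ n"
    and "n \<ge> 2"
    and "H1 \<lhd> G" and "H2 \<lhd> G"
    and "G Mod H1 \<cong> product_group {..<n - 2} (\<lambda>_. integer_mod_group 2)"
    and "G Mod H2 \<cong> integer_mod_group 4"
  shows "\<forall>K. subgroup K G \<and> K \<subseteq> H1 \<longrightarrow> K \<lhd> G"
proof -
  interpret group G by fact
  interpret H1: normal H1 G by fact
  interpret H2: normal H2 G by fact
  have "2 ^ (n - 2) * card H1 = 2 ^ n"
    using H1.card_quotient_iso_mult_card[OF assms(7)] assms(3)
      card_product_integer_mod_group[of "{..<n - 2}" 2] by simp
  moreover have "(2::nat) ^ n = 2 ^ (n - 2) * 2 ^ 2"
    using assms(4) by (metis le_add_diff_inverse2 power_add)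
  ultimately have card: "card H1 = 4"
    by simp
  have "derived G (carrier G) \<subseteq> H1 \<inter> H2"
    using derived_minimal[OF assms(5) H1.comm_group_quotient_if_iso[OF assms(7)]]
      derived_minimal[OF assms(6) H2.comm_group_quotient_if_iso[OF assms(8)]]
    by (simp add: comm_group_product_group)
  moreover have "finite H1"
    using assms(2) H1.subset finite_subset by blast
  moreover obtain g where "g \<in> carrier G" "g \<otimes> g \<notin> H2"
    by (rule H2.obtain_square_not_mem_if_quotient_iso[OF assms(8) group_integer_mod_group, of 1]) auto
  moreover have "g \<otimes> g \<in> H1"
    using H1.square_mem_if_quotient_exponent_two[OF assms(7) _ product_integer_mod_group_two_square_one]
      \<open>g \<in> carrier G\<close> by simp
  ultimately have "x \<otimes> h = h \<otimes> x" if "h \<in> H1" "x \<in> carrier G" for h x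
    using central_if_card_four_normal[OF assms(5,6) _ card] that by blast
  then show ?thesis
    using normal_if_central by blast
qed

end
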